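(* Let $a<b$ be real numbers and let $f:[a,b]\to\mathbb{R}$ be a convex Riemann integrable function. Then for all $t\in[0,1]$, \[ f(tb+(1-t)a)\le (1-t)\int_0^{1}f\big(t\alpha(b-a)+a\big)\,d\alpha+t\int_0^{1}f\big((1-t)\alpha(b-a)+tb+(1-t)a\big)\, d\alpha \le tf(b)+(1-t)f(a). \] *)

theory Defs
  imports "HOL-Analysis.Analysis"
begin

definition riemann_integrable_on :: "(real \<Rightarrow> real) \<Rightarrow> real set \<Rightarrow> bool" where
  "riemann_integrable_on f S \<longleftrightarrow>
     (\<exists>I. \<forall>e>0. \<exists>d>0. \<forall>D. D tagged_division_of S \<and> (\<lambda>x. ball x d) fine D \<longrightarrow>
        \<bar>(\<Sum>(x,K)\<in>D. measure lborel K * f x) - I\<bar> < e)"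

end

theory Submission
  imports Defs
begin

text \<open>With \<open>c = t b + (1 - t) a\<close>, the two integrals are the means of \<open>f\<close> along the segments
  \<open>[a, c]\<close> and \<open>[c, b]\<close>. For the lower bound, \<open>c\<close> is the convex combination with weights
  \<open>1 - t, t\<close> of the point at parameter \<open>\<alpha>\<close> on \<open>[a, c]\<close> and the point at parameter \<open>1 - \<alpha>\<close>
  on \<open>[c, b]\<close>; integrating Jensen's inequality over \<open>\<alpha>\<close> gives it. For the upper bound, the
  mean of a convex function along a segment is at most the average of its endpoint values
  (the right half of Hermite--Hadamard), and \<open>f c \<le> t f b + (1 - t) f a\<close>.\<close>

lemma riemann_integrable_on_imp_integrable_on:
  assumes "riemann_integrable_on f {a..b}"
  shows "f integrable_on {a..b}"
proof -
  from assms obtain I where I: "\<forall>e>0. \<exists>d>0. \<forall>D. D tagged_division_of {a..b} \<and> (\<lambda>x. ball x d) fine D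
      \<longrightarrow> \<bar>(\<Sum>(x,K)\<in>D. measure lborel K * f x) - I\<bar> < e"
    unfolding riemann_integrable_on_def by blast
  have "(f has_integral I) {a..b}"
    unfolding has_integral_real
  proof (intro allI impI)
    fix e :: real
    assume "e > 0"
    with I obtain d where "d > 0" and d: "\<forall>D. D tagged_division_of {a..b} \<and> (\<lambda>x. ball x d) fine D
        \<longrightarrow> \<bar>(\<Sum>(x,K)\<in>D. measure lborel K * f x) - I\<bar> < e"
      by blast
    then show "\<exists>\<gamma>. gauge \<gamma> \<and> (\<forall>\<D>. \<D> tagged_division_of {a..b} \<and> \<gamma> fine \<D> \<longrightarrow>
        norm ((\<Sum>(x,k)\<in>\<D>. measure lborel k *\<^sub>R f x) - I) < e)"
      by (intro exI[of _ "\<lambda>x. ball x d"]) (auto simp: gauge_ball)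
  qed
  then show ?thesis
    by blast
qed

lemma has_integral_reflect_interval:
  fixes h :: "real \<Rightarrow> 'b::real_normed_vector"
  assumes "(h has_integral i) {a..b}"
  shows "((\<lambda>x. h (a + b - x)) has_integral i) {a..b}"
proof -
  have "((\<lambda>x. h (- x + (a + b))) has_integral i) ((\<lambda>x. - x + (a + b)) ` {a..b})"
    using has_integral_affinity[of h i a b "-1" "a + b"] assms by simp
  moreover have "(\<lambda>x. - x + (a + b)) ` {a..b} = {a..b}"
    by (auto intro!: image_eqI[where x = "a + b - x" for x])
  ultimately show ?thesis
    by (simp add: algebra_simps)
qed

lemma integrable_reflect_unit_interval:
  fixes h :: "real \<Rightarrow> 'b::real_normed_vector"
  assumes "h integrable_on {0..1}"
  shows "(\<lambda>x. h (1 - x)) integrable_on {0..1}"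
    and "integral {0..1} (\<lambda>x. h (1 - x)) = integral {0..1} h"
  using has_integral_reflect_interval[OF integrable_integral[OF assms]]
  by (auto simp: integrable_on_def integral_unique)

lemma integrable_on_segment_param:
  fixes f :: "real \<Rightarrow> 'b::banach"
  assumes "f integrable_on {a..b}" and "p \<in> {a..b}" and "q \<in> {a..b}"
  shows "(\<lambda>x. f ((1 - x) * p + x * q)) integrable_on {0..1}"
proof (cases "p = q")
  case True
  then show ?thesis
    by (simp add: algebra_simps integrable_const_ivl)
next
  case False
  then have "(\<lambda>x. f ((q - p) * x + p)) integrable_on (\<lambda>x. (1 / (q - p)) * x - p / (q - p)) ` {a..b}"
    using integrable_on_affinity[of "q - p" f a b p] assms(1) by simp
  moreover have "{0..1} \<subseteq> (\<lambda>x. (1 / (q - p)) * x - p / (q - p)) ` {a..b}"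
  proof
    fix y :: real
    assume y: "y \<in> {0..1}"
    have "(1 - y) * p + y * q \<in> {a..b}"
      using convexD_alt[OF convex_real_interval(5) assms(2,3), of y] y by (simp add: algebra_simps)
    moreover have "y = (1 / (q - p)) * ((1 - y) * p + y * q) - p / (q - p)"
      using False by (simp add: divide_simps) (simp add: algebra_simps)
    ultimately show "y \<in> (\<lambda>x. (1 / (q - p)) * x - p / (q - p)) ` {a..b}"
      by blast
  qed
  ultimately have "(\<lambda>x. f ((q - p) * x + p)) integrable_on {0..1}"
    by (rule integrable_on_subinterval)
  then show ?thesis
    by (simp add: algebra_simps)
qed

lemma convex_on_segment_mean_le:
  fixes f :: "'a::real_vector \<Rightarrow> real"
  assumes "convex_on S f" and "p \<in> S" and "q \<in> S"
    and "(\<lambda>x. f ((1 - x) *\<^sub>R p + x *\<^sub>R q)) integrable_on {0..1}"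
  shows "integral {0..1} (\<lambda>x. f ((1 - x) *\<^sub>R p + x *\<^sub>R q)) \<le> (f p + f q) / 2"
proof -
  define g where "g x = f ((1 - x) *\<^sub>R p + x *\<^sub>R q)" for x
  have g: "g integrable_on {0..1}"
    using assms(4) by (simp add: g_def [abs_def])
  note g_refl = integrable_reflect_unit_interval[OF g]
  have "g x + g (1 - x) \<le> f p + f q" if "x \<in> {0..1}" for x
    using convex_onD[OF assms(1), of x p q] convex_onD[OF assms(1), of "1 - x" p q] that assms(2,3)
    by (auto simp: g_def algebra_simps)
  then have "integral {0..1} (\<lambda>x. g x + g (1 - x)) \<le> integral {0..1::real} (\<lambda>x. f p + f q)"
    using integrable_add[OF g g_refl(1)] by (intro Henstock_Kurzweil_Integration.integral_le) auto
  then show ?thesis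
    using integral_add[OF g g_refl(1)] g_refl(2)
    by (simp add: g_def [abs_def])
qed

lemma convex_on_le_segment_means:
  fixes f :: "'a::real_vector \<Rightarrow> real"
  assumes "convex_on S f" and "a \<in> S" and "b \<in> S" and "t \<in> {0..1}"
    and c: "c = (1 - t) *\<^sub>R a + t *\<^sub>R b"
    and "(\<lambda>x. f ((1 - x) *\<^sub>R a + x *\<^sub>R c)) integrable_on {0..1}"
    and "(\<lambda>x. f ((1 - x) *\<^sub>R c + x *\<^sub>R b)) integrable_on {0..1}"
  shows "f c \<le> (1 - t) * integral {0..1} (\<lambda>x. f ((1 - x) *\<^sub>R a + x *\<^sub>R c))
                + t * integral {0..1} (\<lambda>x. f ((1 - x) *\<^sub>R c + x *\<^sub>R b))"
proof -
  define g1 where "g1 x = f ((1 - x) *\<^sub>R a + x *\<^sub>R c)" for x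
  define g2 where "g2 x = f ((1 - x) *\<^sub>R c + x *\<^sub>R b)" for x
  have g1: "g1 integrable_on {0..1}" and g2: "g2 integrable_on {0..1}"
    using assms(6,7) by (simp_all add: g1_def [abs_def] g2_def [abs_def])
  note g2_refl = integrable_reflect_unit_interval[OF g2]
  have "convex S"
    using assms(1) by (rule convex_on_imp_convex)
  have "c \<in> S"
    using convexD_alt[OF \<open>convex S\<close> assms(2,3)] assms(4) c by auto
  have "f c \<le> (1 - t) * g1 x + t * g2 (1 - x)" if x: "x \<in> {0..1}" for x
  proof -
    define u where "u = (1 - x) *\<^sub>R a + x *\<^sub>R c"
    define v where "v = (1 - (1 - x)) *\<^sub>R c + (1 - x) *\<^sub>R b"
    have "c = (1 - t) *\<^sub>R u + t *\<^sub>R v"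
      by (simp add: u_def v_def c algebra_simps)
    moreover have "u \<in> S"
      using convexD_alt[OF \<open>convex S\<close> assms(2) \<open>c \<in> S\<close>, of x] x by (simp add: u_def)
    moreover have "v \<in> S"
      using convexD_alt[OF \<open>convex S\<close> \<open>c \<in> S\<close> assms(3), of "1 - x"] x by (simp add: v_def)
    ultimately have "f c \<le> (1 - t) * f u + t * f v"
      using convex_onD[OF assms(1)] assms(4) by simp
    then show ?thesis
      by (simp add: g1_def g2_def u_def v_def)
  qed
  then have "integral {0..1::real} (\<lambda>x. f c) \<le> integral {0..1} (\<lambda>x. (1 - t) * g1 x + t * g2 (1 - x))"
    using integrable_add[OF integrable_on_cmult_left[OF g1] integrable_on_cmult_left[OF g2_refl(1)]]
    by (intro Henstock_Kurzweil_Integration.integral_le) auto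
  also have "\<dots> = (1 - t) * integral {0..1} g1 + t * integral {0..1} g2"
    using integral_add[OF integrable_on_cmult_left[OF g1] integrable_on_cmult_left[OF g2_refl(1)]]
      g1 g2_refl by simp
  finally show ?thesis
    by (simp add: g1_def [abs_def] g2_def [abs_def])
qed

lemma segment_means_le_convex_on:
  fixes f :: "'a::real_vector \<Rightarrow> real"
  assumes "convex_on S f" and "a \<in> S" and "b \<in> S" and "t \<in> {0..1}"
    and c: "c = (1 - t) *\<^sub>R a + t *\<^sub>R b"
    and "(\<lambda>x. f ((1 - x) *\<^sub>R a + x *\<^sub>R c)) integrable_on {0..1}"
    and "(\<lambda>x. f ((1 - x) *\<^sub>R c + x *\<^sub>R b)) integrable_on {0..1}"
  shows "(1 - t) * integral {0..1} (\<lambda>x. f ((1 - x) *\<^sub>R a + x *\<^sub>R c))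
           + t * integral {0..1} (\<lambda>x. f ((1 - x) *\<^sub>R c + x *\<^sub>R b))
         \<le> (1 - t) * f a + t * f b"
proof -
  have "c \<in> S"
    using convexD_alt[OF convex_on_imp_convex[OF assms(1)] assms(2,3)] assms(4) c by auto
  have "(1 - t) * integral {0..1} (\<lambda>x. f ((1 - x) *\<^sub>R a + x *\<^sub>R c))
      + t * integral {0..1} (\<lambda>x. f ((1 - x) *\<^sub>R c + x *\<^sub>R b))
      \<le> (1 - t) * ((f a + f c) / 2) + t * ((f c + f b) / 2)"
    using convex_on_segment_mean_le[OF assms(1,2) \<open>c \<in> S\<close> assms(6)]
      convex_on_segment_mean_le[OF assms(1) \<open>c \<in> S\<close> assms(3,7)] assms(4)
    by (intro add_mono mult_left_mono) auto
  also have "\<dots> = ((1 - t) * f a + t * f b + f c) / 2"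
    by (simp add: field_simps)
  also have "\<dots> \<le> (1 - t) * f a + t * f b"
  proof -
    have "f c \<le> (1 - t) * f a + t * f b"
      using convex_onD[OF assms(1), of t a b] assms(2-4) c by simp
    then show ?thesis
      by (simp add: field_simps)
  qed
  finally show ?thesis .
qed

theorem theorem2p1:
  fixes f :: "real \<Rightarrow> real" and a b t :: real
  assumes "a < b"
    and "convex_on {a..b} f"
    and "riemann_integrable_on f {a..b}"
    and "t \<in> {0..1}"
  shows "f (t * b + (1 - t) * a)
           \<le> (1 - t) * integral {0..1} (\<lambda>\<alpha>. f (t * \<alpha> * (b - a) + a))
             + t * integral {0..1} (\<lambda>\<alpha>. f ((1 - t) * \<alpha> * (b - a) + t * b + (1 - t) * a))
       \<and> (1 - t) * integral {0..1} (\<lambda>\<alpha>. f (t * \<alpha> * (b - a) + a))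
             + t * integral {0..1} (\<lambda>\<alpha>. f ((1 - t) * \<alpha> * (b - a) + t * b + (1 - t) * a))
           \<le> t * f b + (1 - t) * f a"
proof -
  define c where "c = t * b + (1 - t) * a"
  have c: "c = (1 - t) *\<^sub>R a + t *\<^sub>R b"
    by (simp add: c_def)
  have ab: "a \<in> {a..b}" "b \<in> {a..b}"
    using assms(1) by auto
  then have "c \<in> {a..b}"
    using convexD_alt[OF convex_real_interval(5) ab] assms(4) c by auto
  have f: "f integrable_on {a..b}"
    using assms(3) by (rule riemann_integrable_on_imp_integrable_on)
  have means: "(\<lambda>\<alpha>. f (t * \<alpha> * (b - a) + a)) = (\<lambda>x. f ((1 - x) *\<^sub>R a + x *\<^sub>R c))"
    "(\<lambda>\<alpha>. f ((1 - t) * \<alpha> * (b - a) + t * b + (1 - t) * a)) = (\<lambda>x. f ((1 - x) *\<^sub>R c + x *\<^sub>R b))"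
    by (simp_all add: c_def algebra_simps)
  have "(\<lambda>x. f ((1 - x) *\<^sub>R a + x *\<^sub>R c)) integrable_on {0..1}"
    "(\<lambda>x. f ((1 - x) *\<^sub>R c + x *\<^sub>R b)) integrable_on {0..1}"
    using integrable_on_segment_param[OF f ab(1) \<open>c \<in> {a..b}\<close>]
      integrable_on_segment_param[OF f \<open>c \<in> {a..b}\<close> ab(2)] by simp_all
  from convex_on_le_segment_means[OF assms(2) ab assms(4) c this]
    segment_means_le_convex_on[OF assms(2) ab assms(4) c this]
  show ?thesis
    unfolding means c_def [symmetric] by (simp add: add.commute)
qed

end
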